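(* With $\theta$ and $\Theta=\theta\vee\widetilde\theta$ as in the context, $c(\Theta)=c(\theta)$.
   Context: $\theta:\mathbb{A}\to\mathbb{A}^\lambda$ is a primitive substitution of constant length $\lambda\ge2$ (some iterate $\theta^k(a)$ contains all letters for each $a$) with $\theta(a_0)_0=a_0$ for some $a_0$, injective on letters, with infinite subshift. Column number of a substitution $\zeta$ over $\mathbb{B}$: $c(\zeta)=\min_{k\ge1,0\le j<\lambda^k}|\{\zeta^k(b)_j:b\in\mathbb{B}\}|$. $\mathcal{X}$ is the set of $M\subset\mathbb{A}$ with $|M|=c(\theta)$ and $M=\{\theta^k(a)_j:a\in\mathbb{A}\}$ for some $k\ge1$, $0\le j<\lambda^k$; $\widetilde\theta(M)_j=\{\theta(a)_j:a\in M\}$. $\overline{\mathcal{X}}=\{(a,M):M\in\mathcal{X},a\in M\}$ and $\Theta:\overline{\mathcal{X}}\to\overline{\mathcal{X}}^\lambda$, $\Theta(a,M)_j=(\theta(a)_j,\widetilde\theta(M)_j)$. *)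

theory Defs
  imports Main
begin

fun subst_iter :: "('a \<Rightarrow> 'a list) \<Rightarrow> nat \<Rightarrow> 'a \<Rightarrow> 'a list" where
  "subst_iter \<zeta> 0 b = [b]"
| "subst_iter \<zeta> (Suc k) b = concat (map \<zeta> (subst_iter \<zeta> k b))"

definition column_number :: "'a set \<Rightarrow> nat \<Rightarrow> ('a \<Rightarrow> 'a list) \<Rightarrow> nat" where
  "column_number B L \<zeta> =
     Min {card {subst_iter \<zeta> k b ! j | b. b \<in> B} | k j. k \<ge> 1 \<and> j < L ^ k}"

definition subst_language :: "'a set \<Rightarrow> ('a \<Rightarrow> 'a list) \<Rightarrow> 'a list set" where
  "subst_language A \<theta> = {w. \<exists>k a u v. a \<in> A \<and> subst_iter \<theta> k a = u @ w @ v}"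

definition subshift :: "'a set \<Rightarrow> ('a \<Rightarrow> 'a list) \<Rightarrow> (int \<Rightarrow> 'a) set" where
  "subshift A \<theta> = {x. \<forall>i n. map (\<lambda>m. x (i + int m)) [0..<n] \<in> subst_language A \<theta>}"

definition primitive_subst :: "'a set \<Rightarrow> ('a \<Rightarrow> 'a list) \<Rightarrow> bool" where
  "primitive_subst A \<theta> \<longleftrightarrow> (\<exists>k\<ge>1. \<forall>a\<in>A. A \<subseteq> set (subst_iter \<theta> k a))"

definition min_columns :: "'a set \<Rightarrow> nat \<Rightarrow> ('a \<Rightarrow> 'a list) \<Rightarrow> 'a set set" where
  "min_columns A L \<theta> = {M. M \<subseteq> A \<and> card M = column_number A L \<theta> \<and>
      (\<exists>k j. k \<ge> 1 \<and> j < L ^ k \<and> M = {subst_iter \<theta> k a ! j | a. a \<in> A})}"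

definition tilde_subst :: "nat \<Rightarrow> ('a \<Rightarrow> 'a list) \<Rightarrow> 'a set \<Rightarrow> 'a set list" where
  "tilde_subst L \<theta> M = map (\<lambda>j. {\<theta> a ! j | a. a \<in> M}) [0..<L]"

text \<open>The alphabet overline-\<X> and the product substitution Theta = theta v tilde-theta.\<close>

definition bar_columns :: "'a set \<Rightarrow> nat \<Rightarrow> ('a \<Rightarrow> 'a list) \<Rightarrow> ('a \<times> 'a set) set" where
  "bar_columns A L \<theta> = {(a, M). M \<in> min_columns A L \<theta> \<and> a \<in> M}"

definition join_subst :: "nat \<Rightarrow> ('a \<Rightarrow> 'a list) \<Rightarrow> ('a \<times> 'a set) \<Rightarrow> ('a \<times> 'a set) list" where
  "join_subst L \<theta> p = map (\<lambda>j. (\<theta> (fst p) ! j, tilde_subst L \<theta> (snd p) ! j)) [0..<L]"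

end

theory Submission
  imports Defs
begin

text \<open>Write \<open>\<theta>\<^sup>k[j]M\<close> (\<open>subst_column \<theta> k j M\<close> below) for the set of letters in
  position \<open>j\<close> of \<open>\<theta>\<^sup>k(b)\<close>, \<open>b \<in> M\<close>.
  Iterating \<open>\<Theta>\<close> on \<open>(a, M)\<close> simply runs \<open>\<theta>\<close> on \<open>a\<close> and on \<open>M\<close> side by side, so the
  columns of \<open>\<Theta>\<close> are read off from the columns \<open>\<theta>\<^sup>k[j]M\<close> with \<open>M \<in> \<X>\<close>.
  Since such an \<open>M\<close> is itself a column of \<open>\<theta>\<close>, so is \<open>\<theta>\<^sup>k[j]M\<close>, hence it has at least
  \<open>c(\<theta>)\<close> and at most \<open>|M| = c(\<theta>)\<close> elements: it lies in \<open>\<X>\<close> again.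
  Consequently every column of \<open>\<Theta>\<close> has at least \<open>c(\<theta>)\<close> elements (look at first
  components), while at a place where \<open>\<theta>\<close> has a minimal column \<open>C\<close>, all \<open>\<theta>\<^sup>k[j]M\<close>
  coincide with \<open>C\<close> and the column of \<open>\<Theta>\<close> is contained in \<open>C \<times> {C}\<close>.\<close>

lemma length_concat_map_const:
  assumes "\<And>x. x \<in> set xs \<Longrightarrow> length (f x) = n"
  shows "length (concat (map f xs)) = length xs * n"
  using assms by (induction xs) auto

lemma nth_concat_map_const:
  assumes "\<And>x. x \<in> set xs \<Longrightarrow> length (f x) = n" and "i < length xs" and "j < n"
  shows "concat (map f xs) ! (i * n + j) = f (xs ! i) ! j"
  using assms
proof (induction xs arbitrary: i)
  case Nil
  then show ?case by simp
next
  case (Cons x xs)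
  then show ?case by (cases i) (auto simp: nth_append add.assoc)
qed

lemma mult_add_less_mult:
  fixes i j m n :: nat
  assumes "i < m" and "j < n"
  shows "i * n + j < m * n"
proof -
  have "i * n + j < (i + 1) * n" using assms(2) by simp
  also have "\<dots> \<le> m * n" using assms(1) by (intro mult_right_mono) auto
  finally show ?thesis .
qed

lemma concat_concat: "concat (concat xss) = concat (map concat xss)"
  by (induction xss) auto

lemma subst_iter_add:
  "subst_iter \<zeta> (m + n) a = concat (map (subst_iter \<zeta> n) (subst_iter \<zeta> m a))"
proof (induction n)
  case 0
  have "subst_iter \<zeta> 0 = (\<lambda>b. [b])" by auto
  then show ?case by simp
next
  case (Suc n)
  then show ?case by (simp add: map_concat concat_concat comp_def)
qed

definition subst_column :: "('a \<Rightarrow> 'a list) \<Rightarrow> nat \<Rightarrow> nat \<Rightarrow> 'a set \<Rightarrow> 'a set" where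
  "subst_column \<zeta> k j M = (\<lambda>b. subst_iter \<zeta> k b ! j) ` M"

lemma column_number_eq_Min_card_subst_column:
  "column_number B L \<zeta> = Min {card (subst_column \<zeta> k j B) | k j. k \<ge> 1 \<and> j < L ^ k}"
  unfolding column_number_def subst_column_def by (simp add: setcompr_eq_image)

lemma finite_card_subst_column:
  assumes "finite B"
  shows "finite {card (subst_column \<zeta> k j B) | k j. P k j}"
proof (rule finite_subset)
  show "{card (subst_column \<zeta> k j B) | k j. P k j} \<subseteq> {..card B}"
    using card_image_le[OF assms] by (auto simp: subst_column_def)
qed simp

lemma column_number_le_card_subst_column:
  assumes "finite B" and "k \<ge> 1" and "j < L ^ k"
  shows "column_number B L \<zeta> \<le> card (subst_column \<zeta> k j B)"
  unfolding column_number_eq_Min_card_subst_column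
  using assms by (intro Min_le finite_card_subst_column) auto

lemma column_number_attained:
  assumes "finite B" and "L > 0"
  obtains k j where "k \<ge> 1" and "j < L ^ k"
    and "card (subst_column \<zeta> k j B) = column_number B L \<zeta>"
proof -
  let ?S = "{card (subst_column \<zeta> k j B) | k j. k \<ge> 1 \<and> j < L ^ k}"
  have "?S \<noteq> {}" using assms(2) by fastforce
  then have "Min ?S \<in> ?S" using assms(1) by (intro Min_in finite_card_subst_column)
  then show thesis using that unfolding column_number_eq_Min_card_subst_column by auto
qed

lemma min_columns_eq:
  "min_columns A L \<theta> = {M. M \<subseteq> A \<and> card M = column_number A L \<theta> \<and>
      (\<exists>k j. k \<ge> 1 \<and> j < L ^ k \<and> M = subst_column \<theta> k j A)}"
  unfolding min_columns_def subst_column_def by (simp add: setcompr_eq_image)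

locale const_length_subst =
  fixes A :: "'a set" and L :: nat and \<theta> :: "'a \<Rightarrow> 'a list"
  assumes length_subst: "a \<in> A \<Longrightarrow> length (\<theta> a) = L"
    and set_subst_subset: "a \<in> A \<Longrightarrow> set (\<theta> a) \<subseteq> A"
begin

lemma set_subst_iter_subset: "a \<in> A \<Longrightarrow> set (subst_iter \<theta> k a) \<subseteq> A"
  by (induction k) (auto dest: set_subst_subset)

lemma length_subst_iter: "a \<in> A \<Longrightarrow> length (subst_iter \<theta> k a) = L ^ k"
proof (induction k)
  case (Suc k)
  have "length (\<theta> x) = L" if "x \<in> set (subst_iter \<theta> k a)" for x
    using that set_subst_iter_subset[OF Suc.prems] length_subst by blast
  then show ?case using Suc by (simp add: length_concat_map_const)
qed simp

lemma nth_subst_iter_add: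
  assumes "a \<in> A" and "i < L ^ m" and "j < L ^ n"
  shows "subst_iter \<theta> (m + n) a ! (i * L ^ n + j) = subst_iter \<theta> n (subst_iter \<theta> m a ! i) ! j"
  unfolding subst_iter_add
proof (rule nth_concat_map_const)
  show "length (subst_iter \<theta> n x) = L ^ n" if "x \<in> set (subst_iter \<theta> m a)" for x
    using that set_subst_iter_subset[OF assms(1)] length_subst_iter by blast
qed (use assms length_subst_iter in auto)

lemma subst_column_subset:
  assumes "M \<subseteq> A" and "j < L ^ k"
  shows "subst_column \<theta> k j M \<subseteq> A"
  unfolding subst_column_def
proof (rule image_subsetI)
  fix b assume "b \<in> M"
  with assms have "b \<in> A" and "j < length (subst_iter \<theta> k b)" by (auto simp: length_subst_iter)
  then show "subst_iter \<theta> k b ! j \<in> A" using set_subst_iter_subset nth_mem by blast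
qed

lemma subst_column_subst_column:
  assumes "M \<subseteq> A" and "i < L ^ m" and "j < L ^ n"
  shows "subst_column \<theta> n j (subst_column \<theta> m i M) = subst_column \<theta> (m + n) (i * L ^ n + j) M"
  unfolding subst_column_def image_image
proof (rule image_cong[OF refl])
  fix b assume "b \<in> M"
  then show "subst_iter \<theta> n (subst_iter \<theta> m b ! i) ! j = subst_iter \<theta> (m + n) b ! (i * L ^ n + j)"
    using assms nth_subst_iter_add[of b i m j n] by auto
qed

lemma subst_column_mem_min_columns:
  assumes "finite A" and "M \<in> min_columns A L \<theta>" and "j < L ^ k"
  shows "subst_column \<theta> k j M \<in> min_columns A L \<theta>"
proof -
  obtain k1 j1 where k1: "k1 \<ge> 1" "j1 < L ^ k1" and M: "M = subst_column \<theta> k1 j1 A"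
    and M_sub: "M \<subseteq> A" and card_M: "card M = column_number A L \<theta>"
    using assms(2) unfolding min_columns_eq by blast
  have col: "subst_column \<theta> k j M = subst_column \<theta> (k1 + k) (j1 * L ^ k + j) A"
    unfolding M using k1(2) assms(3) by (rule subst_column_subst_column[OF order_refl])
  have idx: "j1 * L ^ k + j < L ^ (k1 + k)"
    using mult_add_less_mult[OF k1(2) assms(3)] by (simp add: power_add)
  have "column_number A L \<theta> \<le> card (subst_column \<theta> k j M)"
    unfolding col using assms(1) k1(1) idx by (intro column_number_le_card_subst_column) auto
  moreover have "card (subst_column \<theta> k j M) \<le> card M"
    unfolding subst_column_def using finite_subset[OF M_sub assms(1)] by (rule card_image_le)
  ultimately have "card (subst_column \<theta> k j M) = column_number A L \<theta>" using card_M by simp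
  moreover have "k1 + k \<ge> 1" using k1(1) by simp
  ultimately show ?thesis
    unfolding min_columns_eq using col idx subst_column_subset[OF M_sub assms(3)] by blast
qed

lemma subst_column_min_column_eq:
  assumes "finite A" and "M \<in> min_columns A L \<theta>" and "j < L ^ k"
    and "card (subst_column \<theta> k j A) = column_number A L \<theta>"
  shows "subst_column \<theta> k j M = subst_column \<theta> k j A"
proof (rule card_subset_eq)
  show "finite (subst_column \<theta> k j A)" using assms(1) by (simp add: subst_column_def)
  show "subst_column \<theta> k j M \<subseteq> subst_column \<theta> k j A"
    using assms(2) unfolding min_columns_eq subst_column_def by blast
  show "card (subst_column \<theta> k j M) = card (subst_column \<theta> k j A)"
    using subst_column_mem_min_columns[OF assms(1-3)] assms(4) by (simp add: min_columns_eq)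
qed

lemma nth_subst_mem:
  assumes "a \<in> A" and "j < L"
  shows "\<theta> a ! j \<in> A"
proof -
  have "\<theta> a ! j \<in> set (\<theta> a)" using assms length_subst by simp
  then show ?thesis using set_subst_subset[OF assms(1)] by blast
qed

lemma join_subst_const_length: "const_length_subst (A \<times> Pow A) L (join_subst L \<theta>)"
proof
  fix p assume "p \<in> A \<times> Pow A"
  then show "set (join_subst L \<theta> p) \<subseteq> A \<times> Pow A"
    using nth_subst_mem by (auto simp: join_subst_def tilde_subst_def)
qed (simp add: join_subst_def)

lemma nth_subst_iter_join_subst:
  assumes "a \<in> A" and "M \<subseteq> A" and "j < L ^ k"
  shows "subst_iter (join_subst L \<theta>) k (a, M) ! j = (subst_iter \<theta> k a ! j, subst_column \<theta> k j M)"
  using assms(3)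
proof (induction k arbitrary: j)
  case 0
  then show ?case by (simp add: subst_column_def)
next
  case (Suc k)
  interpret join: const_length_subst "A \<times> Pow A" L "join_subst L \<theta>"
    by (rule join_subst_const_length)
  have "L > 0" using Suc.prems by (cases L) auto
  define i r where "i = j div L" and "r = j mod L"
  have j: "j = i * L ^ 1 + r" and i: "i < L ^ k" and r: "r < L ^ 1"
    using Suc.prems \<open>L > 0\<close> by (auto simp: i_def r_def less_mult_imp_div_less mult.commute)
  have "subst_iter (join_subst L \<theta>) (Suc k) (a, M) ! j
      = join_subst L \<theta> (subst_iter (join_subst L \<theta>) k (a, M) ! i) ! r"
    using join.nth_subst_iter_add[of "(a, M)" i k r 1] assms j i r by simp
  also have "\<dots> = join_subst L \<theta> (subst_iter \<theta> k a ! i, subst_column \<theta> k i M) ! r"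
    using Suc.IH i by simp
  also have "\<dots> = (\<theta> (subst_iter \<theta> k a ! i) ! r, subst_column \<theta> 1 r (subst_column \<theta> k i M))"
    using r by (simp add: join_subst_def tilde_subst_def subst_column_def setcompr_eq_image)
  also have "\<dots> = (subst_iter \<theta> (Suc k) a ! j, subst_column \<theta> (Suc k) j M)"
    using nth_subst_iter_add[of a i k r 1] subst_column_subst_column[of M i k r 1] assms j i r
    by simp
  finally show ?case .
qed

lemma bar_columns_subset: "bar_columns A L \<theta> \<subseteq> A \<times> Pow A"
  by (auto simp: bar_columns_def min_columns_def)

lemma column_number_le_card_join_column:
  assumes "finite A" and "M \<in> min_columns A L \<theta>" and "j < L ^ k"
  shows "column_number A L \<theta> \<le> card (subst_column (join_subst L \<theta>) k j (bar_columns A L \<theta>))"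
proof -
  let ?W = "subst_column (join_subst L \<theta>) k j (bar_columns A L \<theta>)"
  have M_sub: "M \<subseteq> A" using assms(2) by (simp add: min_columns_def)
  have B_finite: "finite (bar_columns A L \<theta>)"
    using assms(1) finite_subset[OF bar_columns_subset] by blast
  have "subst_column \<theta> k j M \<subseteq> fst ` ?W"
  proof
    fix x assume "x \<in> subst_column \<theta> k j M"
    then obtain b where b: "b \<in> M" and x: "x = subst_iter \<theta> k b ! j"
      unfolding subst_column_def by blast
    have "(b, M) \<in> bar_columns A L \<theta>" using b assms(2) by (simp add: bar_columns_def)
    moreover have "fst (subst_iter (join_subst L \<theta>) k (b, M) ! j) = x"
      using nth_subst_iter_join_subst[OF _ M_sub assms(3)] b M_sub x by auto
    ultimately show "x \<in> fst ` ?W" unfolding subst_column_def by (metis image_eqI)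
  qed
  then have "card (subst_column \<theta> k j M) \<le> card (fst ` ?W)"
    using B_finite by (intro card_mono) (simp_all add: subst_column_def)
  also have "\<dots> \<le> card ?W"
    using B_finite by (intro card_image_le) (simp add: subst_column_def)
  finally show ?thesis
    using subst_column_mem_min_columns[OF assms] by (simp add: min_columns_eq)
qed

lemma join_column_subset:
  assumes "finite A" and "j < L ^ k"
    and "card (subst_column \<theta> k j A) = column_number A L \<theta>"
  shows "subst_column (join_subst L \<theta>) k j (bar_columns A L \<theta>)
    \<subseteq> subst_column \<theta> k j A \<times> {subst_column \<theta> k j A}"
proof
  fix y assume "y \<in> subst_column (join_subst L \<theta>) k j (bar_columns A L \<theta>)"
  then obtain a M where M_min: "M \<in> min_columns A L \<theta>" and "a \<in> M"
    and y: "y = subst_iter (join_subst L \<theta>) k (a, M) ! j"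
    unfolding subst_column_def bar_columns_def by auto
  moreover have "M \<subseteq> A" using M_min by (simp add: min_columns_def)
  ultimately have "y = (subst_iter \<theta> k a ! j, subst_column \<theta> k j M)"
    using nth_subst_iter_join_subst[OF _ _ assms(2)] by blast
  moreover have "subst_iter \<theta> k a ! j \<in> subst_column \<theta> k j M"
    using \<open>a \<in> M\<close> by (simp add: subst_column_def)
  moreover have "subst_column \<theta> k j M = subst_column \<theta> k j A"
    using subst_column_min_column_eq[OF assms(1) M_min assms(2,3)] .
  ultimately show "y \<in> subst_column \<theta> k j A \<times> {subst_column \<theta> k j A}" by simp
qed

theorem column_number_join_subst:
  assumes "finite A" and "L > 0"
  shows "column_number (bar_columns A L \<theta>) L (join_subst L \<theta>) = column_number A L \<theta>"
proof (rule antisym)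
  let ?B = "bar_columns A L \<theta>" and ?\<Theta> = "join_subst L \<theta>"
  have B_finite: "finite ?B" using assms(1) finite_subset[OF bar_columns_subset] by blast
  obtain k0 j0 where k0: "k0 \<ge> 1" "j0 < L ^ k0"
    and C_card: "card (subst_column \<theta> k0 j0 A) = column_number A L \<theta>"
    using column_number_attained[OF assms] .
  define C where "C = subst_column \<theta> k0 j0 A"
  have C_finite: "finite C" using assms(1) by (simp add: C_def subst_column_def)
  have "column_number ?B L ?\<Theta> \<le> card (subst_column ?\<Theta> k0 j0 ?B)"
    using B_finite k0 by (rule column_number_le_card_subst_column)
  also have "\<dots> \<le> card (C \<times> {C})"
    using join_column_subset[OF assms(1) k0(2) C_card] C_finite
    unfolding C_def by (intro card_mono) auto
  also have "\<dots> = column_number A L \<theta>" using C_card by (simp add: C_def card_cartesian_product)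
  finally show "column_number ?B L ?\<Theta> \<le> column_number A L \<theta>" .
  have C_min: "C \<in> min_columns A L \<theta>"
    unfolding min_columns_eq C_def using k0 C_card subst_column_subset[OF order_refl k0(2)] by blast
  obtain k j where "k \<ge> 1" "j < L ^ k"
    and "card (subst_column ?\<Theta> k j ?B) = column_number ?B L ?\<Theta>"
    using column_number_attained[OF B_finite assms(2)] .
  then show "column_number A L \<theta> \<le> column_number ?B L ?\<Theta>"
    using column_number_le_card_join_column[OF assms(1) C_min] by metis
qed

end

theorem mainTheorem14:
  fixes A :: "'a set" and \<theta> :: "'a \<Rightarrow> 'a list" and L :: nat and a\<^sub>0 :: 'a
  assumes "finite A" and "A \<noteq> {}"
    and "L \<ge> 2"
    and "\<forall>a\<in>A. length (\<theta> a) = L \<and> set (\<theta> a) \<subseteq> A"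
    and "primitive_subst A \<theta>"
    and "a\<^sub>0 \<in> A" and "\<theta> a\<^sub>0 ! 0 = a\<^sub>0"
    and "inj_on \<theta> A"
    and "infinite (subshift A \<theta>)"
  shows "column_number (bar_columns A L \<theta>) L (join_subst L \<theta>) = column_number A L \<theta>"
proof -
  interpret const_length_subst A L \<theta>
    using assms(4) by unfold_locales auto
  show ?thesis
    using assms(1,3) by (intro column_number_join_subst) auto
qed

end
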